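(* Let $X$ be a complete CAT(0)-space. Then every isometry $T$ of $X$ fixes a point of the metric compactification $\overline{X}$, i.e. there is $h\in\overline{X}$ with $Th=h$. If moreover $X$ is proper, every isometry of $X$ fixes a point of the visual compactification of $X$.
   Context: Fix a base point $x_0\in X$. Let $\mathrm{Hom}(X,\mathbb{R})$ be the set of $1$-Lipschitz functions $X\to\mathbb{R}$ with the topology of pointwise convergence, and for $y\in X$ let $h_y(\cdot)=d(\cdot,y)-d(x_0,y)$. The metric compactification $\overline{X}$ is the closure of $\{h_y:y\in X\}$ in $\mathrm{Hom}(X,\mathbb{R})$; its elements are metric functionals. An isometry (surjective distance-preserving map) $T$ acts on $\overline{X}$ by $(Th)(x)=h(T^{-1}x)-h(T^{-1}x_0)$. A metric space is proper if closed bounded sets are compact. The visual compactification of a proper CAT(0)-space is $X\cup\partial X$, where $\partial X$ is the set of equivalence classes of geodesic rays (two rays equivalent if at bounded distance), with the cone topology; isometries act on it naturally. *)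

theory Defs
  imports "HOL-Analysis.Analysis"
begin

definition geodesic_segment :: "'a::metric_space set \<Rightarrow> 'a \<Rightarrow> 'a \<Rightarrow> (real \<Rightarrow> 'a) \<Rightarrow> bool" where
  "geodesic_segment S a b \<gamma> \<longleftrightarrow>
     \<gamma> 0 = a \<and> \<gamma> (dist a b) = b \<and> \<gamma> ` {0..dist a b} \<subseteq> S \<and>
     (\<forall>s\<in>{0..dist a b}. \<forall>t\<in>{0..dist a b}. dist (\<gamma> s) (\<gamma> t) = \<bar>s - t\<bar>)"

definition geodesic_space :: "'a::metric_space set \<Rightarrow> bool" where
  "geodesic_space S \<longleftrightarrow> (\<forall>a\<in>S. \<forall>b\<in>S. \<exists>\<gamma>. geodesic_segment S a b \<gamma>)"

text \<open>A side of a geodesic triangle together with its comparison side in the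
  Euclidean plane (modelled as complex numbers): (geodesic, start and end of
  the comparison segment, length).\<close>
definition cat0_comparison ::
  "((real \<Rightarrow> 'a::metric_space) \<times> complex \<times> complex \<times> real) set \<Rightarrow> bool" where
  "cat0_comparison sides \<longleftrightarrow>
     (\<forall>(\<sigma>, P, Q, L)\<in>sides. \<forall>(\<tau>, R, R', M)\<in>sides. \<forall>s\<in>{0..L}. \<forall>t\<in>{0..M}.
        dist (\<sigma> s) (\<tau> t)
          \<le> dist (P + of_real (s / L) * (Q - P)) (R + of_real (t / M) * (R' - R)))"

definition CAT0 :: "'a::metric_space set \<Rightarrow> bool" where
  "CAT0 S \<longleftrightarrow> geodesic_space S \<and>
     (\<forall>a\<in>S. \<forall>b\<in>S. \<forall>c\<in>S. \<forall>\<gamma>ab \<gamma>bc \<gamma>ca. \<forall>a' b' c' :: complex.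
        geodesic_segment S a b \<gamma>ab \<and> geodesic_segment S b c \<gamma>bc \<and> geodesic_segment S c a \<gamma>ca \<and>
        dist a' b' = dist a b \<and> dist b' c' = dist b c \<and> dist c' a' = dist c a \<longrightarrow>
        cat0_comparison {(\<gamma>ab, a', b', dist a b), (\<gamma>bc, b', c', dist b c), (\<gamma>ca, c', a', dist c a)})"

definition proper_space :: "'a::metric_space set \<Rightarrow> bool" where
  "proper_space S \<longleftrightarrow> (\<forall>K. K \<subseteq> S \<and> closed K \<and> bounded K \<longrightarrow> compact K)"

definition isometry :: "('a::metric_space \<Rightarrow> 'a) \<Rightarrow> bool" where
  "isometry T \<longleftrightarrow> surj T \<and> (\<forall>x y. dist (T x) (T y) = dist x y)"

text \<open>h_y and the metric compactification (closure in the product topology of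
  pointwise convergence on 'a \<Rightarrow> real; all its elements are 1-Lipschitz).\<close>
definition horofun :: "'a::metric_space \<Rightarrow> 'a \<Rightarrow> 'a \<Rightarrow> real" where
  "horofun x0 y = (\<lambda>x. dist x y - dist x0 y)"

definition metric_compactification :: "'a::metric_space \<Rightarrow> ('a \<Rightarrow> real) set" where
  "metric_compactification x0 = closure (range (horofun x0))"

definition isom_action :: "'a \<Rightarrow> ('a \<Rightarrow> 'a) \<Rightarrow> ('a \<Rightarrow> real) \<Rightarrow> ('a \<Rightarrow> real)" where
  "isom_action x0 T h = (\<lambda>x. h (inv T x) - h (inv T x0))"

definition geodesic_ray :: "(real \<Rightarrow> 'a::metric_space) \<Rightarrow> bool" where
  "geodesic_ray \<gamma> \<longleftrightarrow> (\<forall>s\<ge>0. \<forall>t\<ge>0. dist (\<gamma> s) (\<gamma> t) = \<bar>s - t\<bar>)"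

definition asymptotic :: "(real \<Rightarrow> 'a::metric_space) \<Rightarrow> (real \<Rightarrow> 'a) \<Rightarrow> bool" where
  "asymptotic \<gamma> \<delta> \<longleftrightarrow> (\<exists>C. \<forall>t\<ge>0. dist (\<gamma> t) (\<delta> t) \<le> C)"

text \<open>T fixes a point of the visual compactification X \<union> \<partial>X: either a point
  of X, or the class of some ray (T acts by [\<gamma>] \<mapsto> [T \<circ> \<gamma>]).\<close>
definition fixes_visual_point :: "('a::metric_space \<Rightarrow> 'a) \<Rightarrow> bool" where
  "fixes_visual_point T \<longleftrightarrow> (\<exists>x. T x = x) \<or> (\<exists>\<gamma>. geodesic_ray \<gamma> \<and> asymptotic (T \<circ> \<gamma>) \<gamma>)"

end

theory Submission
  imports Defs
begin

(* If an orbit of T is bounded, its circumcentre is fixed by T: in a complete CAT(0) space the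
   CN inequality makes the circumcentre exist and be unique. Otherwise choose orbit points y_n
   escaping to infinity; all of them are moved by the same distance d(x0, T x0). Comparison
   triangles show that h_z - h_y tends to 0 pointwise when d(y, z) stays bounded and y escapes,
   so every cluster point of the h_(y_n) in the metric compactification is T-invariant. If X is
   proper, the geodesics from x0 to y_n accumulate on a ray, and convexity of the distance between
   geodesics keeps that ray within d(x0, T x0) of its image under T. *)

lemma cmod_affine_combination_sq:
  fixes a b c :: complex and l :: real
  shows "(cmod (c - (a + of_real l * (b - a))))\<^sup>2
     = (1 - l) * (cmod (c - a))\<^sup>2 + l * (cmod (c - b))\<^sup>2 - l * (1 - l) * (cmod (b - a))\<^sup>2"
  unfolding cmod_power2 by (simp add: algebra_simps power2_eq_square)

lemma complex_segment_point_rescale: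
  fixes p q :: complex
  assumes "dist p q = L"
  shows "p + of_real (s * L / L) * (q - p) = p + of_real s * (q - p)"
  using assms by (cases "L = 0") auto

lemma triangle_in_complex_plane:
  fixes p q r :: real
  assumes "0 \<le> p" "0 \<le> q" "0 \<le> r" "q \<le> p + r" "p \<le> q + r" "r \<le> p + q"
  shows "\<exists>a b c :: complex. dist a b = p \<and> dist b c = q \<and> dist c a = r"
proof (cases "p = 0")
  case True
  then have "q = r" using assms by auto
  then show ?thesis using True assms
    by (intro exI[of _ 0] exI[of _ "of_real p"] exI[of _ "of_real r"]) (simp add: dist_norm)
next
  case False
  then have p: "p > 0" using assms by auto
  define u where "u = (p\<^sup>2 + r\<^sup>2 - q\<^sup>2) / (2 * p)"
  have "(p - r)\<^sup>2 \<le> q\<^sup>2" using assms abs_le_square_iff[of "p - r" q] by (simp add: abs_le_iff)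
  moreover have "q\<^sup>2 \<le> (p + r)\<^sup>2" using assms by (simp add: power_mono)
  ultimately have "\<bar>p\<^sup>2 + r\<^sup>2 - q\<^sup>2\<bar> \<le> \<bar>2 * p * r\<bar>" using assms
    by (simp add: power2_eq_square algebra_simps abs_le_iff)
  then have "(p\<^sup>2 + r\<^sup>2 - q\<^sup>2)\<^sup>2 \<le> (2 * p * r)\<^sup>2" using abs_le_square_iff by blast
  then have "u\<^sup>2 \<le> r\<^sup>2" unfolding u_def using p by (simp add: power_divide field_simps)
  define v where "v = sqrt (r\<^sup>2 - u\<^sup>2)"
  have v: "v\<^sup>2 = r\<^sup>2 - u\<^sup>2" unfolding v_def using \<open>u\<^sup>2 \<le> r\<^sup>2\<close> by simp
  then have "cmod (Complex u v) = r" using assms by (simp add: cmod_def)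
  moreover have "(u - p)\<^sup>2 + v\<^sup>2 = q\<^sup>2"
    using v p unfolding u_def by (simp add: field_simps power2_eq_square)
  then have "cmod (of_real p - Complex u v) = q"
    using assms by (simp add: cmod_def complex_of_real_def power2_commute real_sqrt_unique)
  ultimately show ?thesis using assms
    by (intro exI[of _ 0] exI[of _ "of_real p"] exI[of _ "Complex u v"]) (simp add: dist_norm)
qed

lemma comparison_triangle_exists:
  fixes a b c :: "'a::metric_space"
  shows "\<exists>a' b' c' :: complex. dist a' b' = dist a b \<and> dist b' c' = dist b c \<and> dist c' a' = dist c a"
  by (rule triangle_in_complex_plane)
    (simp_all add: dist_triangle2 dist_triangle3, (metis dist_commute dist_triangle2)+)

lemma geodesic_segment_start: "geodesic_segment S a b g \<Longrightarrow> g 0 = a"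
  by (simp add: geodesic_segment_def)

lemma geodesic_segment_dist:
  "geodesic_segment S a b g \<Longrightarrow> s \<in> {0..dist a b} \<Longrightarrow> t \<in> {0..dist a b}
    \<Longrightarrow> dist (g s) (g t) = \<bar>s - t\<bar>"
  by (simp add: geodesic_segment_def)

lemma geodesic_segment_dist_start:
  "geodesic_segment S a b g \<Longrightarrow> 0 \<le> s \<Longrightarrow> s \<le> dist a b \<Longrightarrow> dist a (g s) = s"
  using geodesic_segment_dist[of S a b g 0 s] by (simp add: geodesic_segment_def)

lemma geodesic_segment_dist_end:
  "geodesic_segment S a b g \<Longrightarrow> 0 \<le> s \<Longrightarrow> s \<le> dist a b \<Longrightarrow> dist (g s) b = dist a b - s"
  using geodesic_segment_dist[of S a b g s "dist a b"] by (simp add: geodesic_segment_def)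

lemma geodesic_segment_reverse:
  "geodesic_segment UNIV a b g \<Longrightarrow> geodesic_segment UNIV b a (\<lambda>s. g (dist a b - s))"
  unfolding geodesic_segment_def by (auto simp: dist_commute)

lemma geodesic_segment_isometry:
  "geodesic_segment UNIV a b g \<Longrightarrow> isometry T \<Longrightarrow> geodesic_segment UNIV (T a) (T b) (T \<circ> g)"
  unfolding geodesic_segment_def isometry_def by auto

lemma CAT0_geodesic_segment_exists:
  "CAT0 (UNIV::'a::metric_space set) \<Longrightarrow> \<exists>g. geodesic_segment UNIV (a::'a) b g"
  unfolding CAT0_def geodesic_space_def by blast

lemma CAT0_comparison:
  fixes a b c :: "'a::metric_space" and a' b' c' :: complex
  assumes "CAT0 (UNIV::'a set)"
    and "geodesic_segment UNIV a b g1" "geodesic_segment UNIV b c g2" "geodesic_segment UNIV c a g3"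
    and "dist a' b' = dist a b" "dist b' c' = dist b c" "dist c' a' = dist c a"
    and "(\<sigma>, P, Q, L) \<in> {(g1, a', b', dist a b), (g2, b', c', dist b c), (g3, c', a', dist c a)}"
    and "(\<tau>, R, R', M) \<in> {(g1, a', b', dist a b), (g2, b', c', dist b c), (g3, c', a', dist c a)}"
    and "s \<in> {0..L}" "t \<in> {0..M}"
  shows "dist (\<sigma> s) (\<tau> t) \<le> dist (P + of_real (s / L) * (Q - P)) (R + of_real (t / M) * (R' - R))"
proof -
  have "cat0_comparison {(g1, a', b', dist a b), (g2, b', c', dist b c), (g3, c', a', dist c a)}"
    using assms(1-7) unfolding CAT0_def by blast
  then show ?thesis using assms(8-) unfolding cat0_comparison_def by fastforce
qed

lemma CAT0_CN_inequality:
  fixes p q z :: "'a::metric_space"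
  assumes cat: "CAT0 (UNIV::'a set)" and g: "geodesic_segment UNIV p q g"
    and s: "0 \<le> s" "s \<le> dist p q" and pq: "dist p q > 0"
  shows "(dist z (g s))\<^sup>2
    \<le> (1 - s / dist p q) * (dist z p)\<^sup>2 + (s / dist p q) * (dist z q)\<^sup>2 - s * (dist p q - s)"
proof -
  obtain g2 where g2: "geodesic_segment UNIV q z g2" using CAT0_geodesic_segment_exists[OF cat] by blast
  obtain g3 where g3: "geodesic_segment UNIV z p g3" using CAT0_geodesic_segment_exists[OF cat] by blast
  obtain a b c :: complex where abc: "dist a b = dist p q" "dist b c = dist q z" "dist c a = dist z p"
    using comparison_triangle_exists by blast
  have "dist (g3 0) (g s) \<le> dist (c + of_real (0 / dist z p) * (a - c)) (a + of_real (s / dist p q) * (b - a))"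
    by (rule CAT0_comparison[OF cat g g2 g3 abc]) (use s in auto)
  then have "dist z (g s) \<le> cmod (c - (a + of_real (s / dist p q) * (b - a)))"
    using geodesic_segment_start[OF g3] by (simp add: dist_norm)
  then have "(dist z (g s))\<^sup>2 \<le> (cmod (c - (a + of_real (s / dist p q) * (b - a))))\<^sup>2"
    by (simp add: power_mono)
  also have "\<dots> = (1 - s / dist p q) * (dist z p)\<^sup>2 + (s / dist p q) * (dist z q)\<^sup>2
       - (s / dist p q) * (1 - s / dist p q) * (dist p q)\<^sup>2"
    unfolding cmod_affine_combination_sq using abc by (simp add: dist_norm norm_minus_commute dist_commute)
  also have "(s / dist p q) * (1 - s / dist p q) * (dist p q)\<^sup>2 = s * (dist p q - s)"
    using pq by (simp add: field_simps power2_eq_square)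
  finally show ?thesis .
qed

lemma CAT0_fan_inequality:
  fixes y x z :: "'a::metric_space"
  assumes cat: "CAT0 (UNIV::'a set)"
    and g: "geodesic_segment UNIV y x g" and g': "geodesic_segment UNIV y z g'"
    and l: "0 \<le> l" "l \<le> 1"
  shows "dist (g (l * dist y x)) (g' (l * dist y z)) \<le> l * dist x z"
proof -
  define L where "L = dist y x"
  define L' where "L' = dist y z"
  obtain g2 where g2: "geodesic_segment UNIV x z g2" using CAT0_geodesic_segment_exists[OF cat] by blast
  have g3: "geodesic_segment UNIV z y (\<lambda>u. g' (L' - u))"
    using geodesic_segment_reverse[OF g'] unfolding L'_def .
  obtain a b c :: complex where abc: "dist a b = L" "dist b c = dist x z" "dist c a = L'"
    using comparison_triangle_exists[of y x z] by (auto simp: L_def L'_def dist_commute)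
  have "dist (g (l * L)) ((\<lambda>u. g' (L' - u)) ((1 - l) * L'))
      \<le> dist (a + of_real (l * L / L) * (b - a)) (c + of_real ((1 - l) * L' / L') * (a - c))"
    by (rule CAT0_comparison[OF cat g g2 g3, of a b c])
      (use l abc in \<open>auto simp: L_def L'_def dist_commute mult_left_le_one_le\<close>)
  also have "\<dots> = dist (a + of_real l * (b - a)) (c + of_real (1 - l) * (a - c))"
    unfolding complex_segment_point_rescale[OF abc(1)] complex_segment_point_rescale[OF abc(3)] ..
  also have "\<dots> = l * dist x z"
  proof -
    have "(a + of_real l * (b - a)) - (c + of_real (1 - l) * (a - c)) = of_real l * (b - c)"
      by (simp add: algebra_simps)
    then show ?thesis
      using abc(2) l by (simp add: dist_norm norm_mult)
  qed
  finally show ?thesis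
    by (simp add: L_def L'_def algebra_simps)
qed

lemma CAT0_geodesic_dist_convex:
  fixes p q p' q' :: "'a::metric_space"
  assumes cat: "CAT0 (UNIV::'a set)"
    and \<alpha>: "geodesic_segment UNIV p q \<alpha>" and \<beta>: "geodesic_segment UNIV p' q' \<beta>"
    and L: "dist p' q' = dist p q" and s: "0 \<le> s" "s \<le> dist p q"
  shows "dist (\<alpha> s) (\<beta> s) \<le> (1 - s / dist p q) * dist p p' + (s / dist p q) * dist q q'"
proof (cases "dist p q = 0")
  case True
  then show ?thesis using s geodesic_segment_start[OF \<alpha>] geodesic_segment_start[OF \<beta>] by simp
next
  case False
  define l where "l = s / dist p q"
  have l: "0 \<le> l" "l \<le> 1" "s = l * dist p q" using s False unfolding l_def by auto
  obtain \<delta> where \<delta>: "geodesic_segment UNIV p q' \<delta>" using CAT0_geodesic_segment_exists[OF cat] by blast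
  have "dist (\<alpha> s) (\<delta> (l * dist p q')) \<le> l * dist q q'"
    using CAT0_fan_inequality[OF cat \<alpha> \<delta> l(1,2)] l(3) by simp
  moreover have "dist (\<beta> s) (\<delta> (l * dist p q')) \<le> (1 - l) * dist p p'"
  proof -
    have "geodesic_segment UNIV q' p' (\<lambda>u. \<beta> (dist p q - u))"
      using geodesic_segment_reverse[OF \<beta>] L by simp
    moreover have "geodesic_segment UNIV q' p (\<lambda>u. \<delta> (dist p q' - u))"
      using geodesic_segment_reverse[OF \<delta>] .
    ultimately have "dist (\<beta> (dist p q - (1 - l) * dist p q)) (\<delta> (dist p q' - (1 - l) * dist p q'))
        \<le> (1 - l) * dist p' p"
      using CAT0_fan_inequality[OF cat, of q' p' _ p _ "1 - l"] l L by (simp add: dist_commute)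
    then show ?thesis using l(3) by (simp add: algebra_simps dist_commute)
  qed
  ultimately have "dist (\<alpha> s) (\<beta> s) \<le> l * dist q q' + (1 - l) * dist p p'"
    using dist_triangle2[of "\<alpha> s" "\<beta> s" "\<delta> (l * dist p q')"] by linarith
  then show ?thesis unfolding l_def by simp
qed

lemma CAT0_midpoint_inequality:
  fixes x z :: "'a::metric_space"
  assumes cat: "CAT0 (UNIV::'a set)"
  shows "\<exists>m. \<forall>a. (dist a m)\<^sup>2 \<le> ((dist a x)\<^sup>2 + (dist a z)\<^sup>2) / 2 - (dist x z)\<^sup>2 / 4"
proof (cases "x = z")
  case True
  then show ?thesis by (intro exI[of _ x]) simp
next
  case False
  then have L: "dist x z > 0" by simp
  obtain g where g: "geodesic_segment UNIV x z g" using CAT0_geodesic_segment_exists[OF cat] by blast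
  show ?thesis
  proof (intro exI allI)
    fix a
    have "(dist a (g (dist x z / 2)))\<^sup>2 \<le> (1 - (dist x z / 2) / dist x z) * (dist a x)\<^sup>2
        + ((dist x z / 2) / dist x z) * (dist a z)\<^sup>2 - (dist x z / 2) * (dist x z - dist x z / 2)"
      by (rule CAT0_CN_inequality[OF cat g]) (use L in auto)
    also have "\<dots> = ((dist a x)\<^sup>2 + (dist a z)\<^sup>2) / 2 - (dist x z)\<^sup>2 / 4"
      using L by (simp add: field_simps power2_eq_square)
    finally show "(dist a (g (dist x z / 2)))\<^sup>2 \<le> ((dist a x)\<^sup>2 + (dist a z)\<^sup>2) / 2 - (dist x z)\<^sup>2 / 4" .
  qed
qed

lemma CAT0_geodesics_from_common_point_dist:
  fixes y x z :: "'a::metric_space"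
  assumes cat: "CAT0 (UNIV::'a set)"
    and g: "geodesic_segment UNIV y x g" and g': "geodesic_segment UNIV y z g'"
    and t: "0 \<le> t" "t \<le> dist y x" "t \<le> dist y z" and yx: "dist y x > 0"
  shows "dist (g t) (g' t) \<le> 2 * t * dist x z / dist y x"
proof -
  define l where "l = t / dist y x"
  have l: "0 \<le> l" "l \<le> 1" "t = l * dist y x" using t yx unfolding l_def by auto
  have "dist (g t) (g' t) \<le> dist (g t) (g' (l * dist y z)) + dist (g' (l * dist y z)) (g' t)"
    by (rule dist_triangle)
  also have "dist (g t) (g' (l * dist y z)) \<le> l * dist x z"
    using CAT0_fan_inequality[OF cat g g' l(1,2)] l(3) by simp
  also have "dist (g' (l * dist y z)) (g' t) = \<bar>l * dist y z - t\<bar>"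
    using l t by (intro geodesic_segment_dist[OF g']) (auto simp: mult_left_le_one_le)
  also have "\<dots> = l * \<bar>dist y z - dist y x\<bar>"
    using l by (metis abs_mult abs_of_nonneg right_diff_distrib)
  also have "\<dots> \<le> l * dist x z"
    using abs_dist_diff_le[of z y x] l(1) by (intro mult_left_mono) (simp_all add: dist_commute)
  finally show ?thesis
    unfolding l_def by simp
qed

lemma CN_bound_imp_excess_le:
  fixes L t u A d :: real
  assumes t: "0 < t" "t \<le> L" and u: "0 \<le> u" and A: "0 \<le> A" "A \<le> L - t + u"
    and CN: "u\<^sup>2 \<le> (1 - t / L) * d\<^sup>2 + (t / L) * A\<^sup>2 - t * (L - t)"
  shows "L - t + u - A \<le> d\<^sup>2 / t"
proof -
  define B where "B = L - t + u"
  have "L * u\<^sup>2 \<le> L * ((1 - t / L) * d\<^sup>2 + (t / L) * A\<^sup>2 - t * (L - t))"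
    using CN t by (simp add: mult_left_mono)
  also have "\<dots> = (L - t) * d\<^sup>2 + t * A\<^sup>2 - t * L * (L - t)"
    using t by (simp add: field_simps)
  finally have CN': "L * u\<^sup>2 \<le> (L - t) * d\<^sup>2 + t * A\<^sup>2 - t * L * (L - t)" .
  have "t * (B - A) * (B + A) - (L - t) * (d\<^sup>2 - (u - t)\<^sup>2)
      = L * u\<^sup>2 - ((L - t) * d\<^sup>2 + t * A\<^sup>2 - t * L * (L - t))"
    unfolding B_def by (simp add: power2_eq_square algebra_simps)
  then have "t * (B - A) * (B + A) \<le> (L - t) * (d\<^sup>2 - (u - t)\<^sup>2)"
    using CN' by linarith
  also have "\<dots> \<le> (L - t) * d\<^sup>2"
    using t by (simp add: mult_left_mono)
  also have "\<dots> \<le> (B + A) * d\<^sup>2"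
    using u A t unfolding B_def by (intro mult_right_mono) auto
  finally have key: "t * (B - A) * (B + A) \<le> (B + A) * d\<^sup>2" .
  show ?thesis
  proof (cases "B + A = 0")
    case True
    then have "B - A = 0" using A unfolding B_def by linarith
    then show ?thesis using t unfolding B_def by simp
  next
    case False
    then have "B + A > 0" using A unfolding B_def by linarith
    then have "t * (B - A) \<le> d\<^sup>2" using key by (simp add: mult.commute)
    then show ?thesis using t unfolding B_def by (simp add: field_simps)
  qed
qed

lemma CAT0_geodesic_detour:
  fixes y x z :: "'a::metric_space"
  assumes cat: "CAT0 (UNIV::'a set)" and g: "geodesic_segment UNIV y x g"
    and t: "0 < t" "t \<le> dist y x"
  shows "dist x z \<le> dist y x - t + dist z (g t)"
    and "dist y x - t + dist z (g t) - dist x z \<le> (dist y z)\<^sup>2 / t"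
proof -
  have "dist (g t) x = dist y x - t"
    using geodesic_segment_dist_end[OF g] t by simp
  then show detour: "dist x z \<le> dist y x - t + dist z (g t)"
    using dist_triangle[of x z "g t"] by (simp add: dist_commute)
  have "(dist z (g t))\<^sup>2 \<le> (1 - t / dist y x) * (dist y z)\<^sup>2 + (t / dist y x) * (dist x z)\<^sup>2
      - t * (dist y x - t)"
    using CAT0_CN_inequality[OF cat g less_imp_le[OF t(1)] t(2) less_le_trans[OF t], of z]
    by (simp add: dist_commute)
  then show "dist y x - t + dist z (g t) - dist x z \<le> (dist y z)\<^sup>2 / t"
    using t detour by (intro CN_bound_imp_excess_le) auto
qed

lemma CAT0_horofun_shift_bound:
  fixes x x0 y z :: "'a::metric_space"
  assumes cat: "CAT0 (UNIV::'a set)" and t: "0 < t" "t \<le> dist y x" "t \<le> dist y x0"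
  shows "\<bar>horofun x0 z x - horofun x0 y x\<bar> \<le> 2 * t * dist x x0 / dist y x + (dist y z)\<^sup>2 / t"
proof -
  obtain g where g: "geodesic_segment UNIV y x g"
    using CAT0_geodesic_segment_exists[OF cat] by blast
  obtain g' where g': "geodesic_segment UNIV y x0 g'"
    using CAT0_geodesic_segment_exists[OF cat] by blast
  note detour = CAT0_geodesic_detour[OF cat g t(1,2), of z] CAT0_geodesic_detour[OF cat g' t(1,3), of z]
  have "dist (g t) (g' t) \<le> 2 * t * dist x x0 / dist y x"
    using t by (intro CAT0_geodesics_from_common_point_dist[OF cat g g']) auto
  moreover have "\<bar>dist z (g t) - dist z (g' t)\<bar> \<le> dist (g t) (g' t)"
    using abs_dist_diff_le[of "g t" z "g' t"] by (simp add: dist_commute abs_minus_commute)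
  ultimately show ?thesis
    using detour unfolding horofun_def by (simp add: dist_commute abs_le_iff)
qed

lemma CAT0_horofun_shift_small:
  fixes x x0 :: "'a::metric_space"
  assumes cat: "CAT0 (UNIV::'a set)" and e: "e > 0"
  obtains R where "\<And>y z. dist y z \<le> c \<Longrightarrow> R \<le> dist x0 y \<Longrightarrow> \<bar>horofun x0 z x - horofun x0 y x\<bar> \<le> e"
proof
  define D where "D = dist x x0"
  define t where "t = 2 * c\<^sup>2 / e + 1"
  have t: "t > 0" unfolding t_def using e by (simp add: add_nonneg_pos)
  have tD: "4 * t * D / e \<ge> 0" unfolding D_def using t e by simp
  fix y z assume yz: "dist y z \<le> c" and R: "t + D + 4 * t * D / e \<le> dist x0 y"
  have "dist x0 y \<le> dist y x + D"
    unfolding D_def using dist_triangle[of x0 y x] by (simp add: dist_commute)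
  then have yx: "t + 4 * t * D / e \<le> dist y x" using R by linarith
  have "2 * t * D / dist y x \<le> e / 2"
  proof -
    have "e * (4 * t * D / e) \<le> e * dist y x"
      using yx t e by (intro mult_left_mono) auto
    then have "4 * t * D \<le> e * dist y x"
      using e by simp
    moreover have "dist y x > 0" using yx t tD by linarith
    ultimately show ?thesis by (simp add: field_simps)
  qed
  moreover have "(dist y z)\<^sup>2 / t \<le> e / 2"
  proof -
    have "(dist y z)\<^sup>2 \<le> c\<^sup>2" using yz by (simp add: power_mono)
    also have "c\<^sup>2 \<le> e / 2 * t" unfolding t_def using e by (simp add: field_simps)
    finally show ?thesis using t by (simp add: field_simps)
  qed
  moreover have "t \<le> dist y x" using yx tD by linarith
  moreover have "t \<le> dist x0 y" using R tD zero_le_dist[of x x0] unfolding D_def by linarith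
  then have "t \<le> dist y x0" by (simp add: dist_commute)
  ultimately show "\<bar>horofun x0 z x - horofun x0 y x\<bar> \<le> e"
    using CAT0_horofun_shift_bound[OF cat t, of y x x0 z] unfolding D_def by linarith
qed

lemma CAT0_horofun_shift_tendsto:
  fixes x x0 :: "'a::metric_space"
  assumes cat: "CAT0 (UNIV::'a set)"
    and far: "filterlim (\<lambda>n. dist x0 (ys n)) at_top sequentially"
    and close: "\<And>n. dist (ys n) (zs n) \<le> c"
  shows "(\<lambda>n. horofun x0 (zs n) x - horofun x0 (ys n) x) \<longlonglongrightarrow> 0"
proof (rule tendstoI)
  fix e :: real assume "e > 0"
  then obtain R where R: "\<And>y z. dist y z \<le> c \<Longrightarrow> R \<le> dist x0 y
      \<Longrightarrow> \<bar>horofun x0 z x - horofun x0 y x\<bar> \<le> e / 2"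
    using CAT0_horofun_shift_small[OF cat half_gt_zero[OF \<open>e > 0\<close>]] by blast
  have "eventually (\<lambda>n. R \<le> dist x0 (ys n)) sequentially"
    using far unfolding filterlim_at_top by blast
  then show "eventually (\<lambda>n. dist (horofun x0 (zs n) x - horofun x0 (ys n) x) 0 < e) sequentially"
    by eventually_elim (use R close \<open>e > 0\<close> in \<open>fastforce simp: dist_real_def\<close>)
qed

definition circumradius :: "'a::metric_space set \<Rightarrow> 'a \<Rightarrow> real" where
  "circumradius A x = (SUP a\<in>A. dist x a)"

lemma dist_le_circumradius: "bounded A \<Longrightarrow> a \<in> A \<Longrightarrow> dist x a \<le> circumradius A x"
  unfolding circumradius_def bounded_any_center[of A x]
  by (rule cSUP_upper) (auto intro: bdd_aboveI2)

lemma circumradius_le: "A \<noteq> {} \<Longrightarrow> (\<And>a. a \<in> A \<Longrightarrow> dist x a \<le> c) \<Longrightarrow> circumradius A x \<le> c"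
  unfolding circumradius_def by (rule cSUP_least)

lemma circumradius_nonneg:
  assumes "bounded A" "A \<noteq> {}"
  shows "0 \<le> circumradius A x"
proof -
  obtain a where "a \<in> A" using assms(2) by blast
  then show ?thesis using dist_le_circumradius[OF assms(1), of a x] zero_le_dist[of x a] by linarith
qed

lemma circumradius_lipschitz:
  assumes "bounded A" "A \<noteq> {}"
  shows "1-lipschitz_on UNIV (circumradius A)"
proof (rule lipschitz_onI)
  have le: "circumradius A x \<le> circumradius A y + dist x y" for x y
  proof (rule circumradius_le[OF assms(2)])
    fix a assume "a \<in> A"
    then have "dist y a \<le> circumradius A y" by (rule dist_le_circumradius[OF assms(1)])
    then show "dist x a \<le> circumradius A y + dist x y" using dist_triangle[of x a y] by linarith
  qed
  fix x y
  show "dist (circumradius A x) (circumradius A y) \<le> 1 * dist x y"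
    using le[of x y] le[of y x] by (simp add: dist_real_def dist_commute abs_le_iff)
qed simp

lemma CAT0_circumradius_midpoint:
  fixes A :: "'a::metric_space set"
  assumes cat: "CAT0 (UNIV::'a set)" and A: "bounded A" "A \<noteq> {}"
  shows "\<exists>m. 4 * (circumradius A m)\<^sup>2 \<le> 2 * (circumradius A x)\<^sup>2 + 2 * (circumradius A z)\<^sup>2 - (dist x z)\<^sup>2"
proof -
  obtain m where m: "\<And>a. (dist a m)\<^sup>2 \<le> ((dist a x)\<^sup>2 + (dist a z)\<^sup>2) / 2 - (dist x z)\<^sup>2 / 4"
    using CAT0_midpoint_inequality[OF cat] by blast
  define K where "K = ((circumradius A x)\<^sup>2 + (circumradius A z)\<^sup>2) / 2 - (dist x z)\<^sup>2 / 4"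
  have sq: "(dist m a)\<^sup>2 \<le> K" if "a \<in> A" for a
  proof -
    have "(dist x a)\<^sup>2 \<le> (circumradius A x)\<^sup>2" "(dist z a)\<^sup>2 \<le> (circumradius A z)\<^sup>2"
      using dist_le_circumradius[OF A(1) that] by (simp_all add: power_mono)
    then show ?thesis
      using m[of a] unfolding K_def by (simp add: dist_commute field_simps)
  qed
  obtain a0 where "a0 \<in> A" using A(2) by blast
  then have "0 \<le> K" using sq[of a0] zero_le_power2[of "dist m a0"] by linarith
  have "circumradius A m \<le> sqrt K"
    using sq by (intro circumradius_le[OF A(2)]) (simp add: real_le_rsqrt)
  then have "(circumradius A m)\<^sup>2 \<le> (sqrt K)\<^sup>2"
    using circumradius_nonneg[OF A] by (rule power_mono)
  then have "(circumradius A m)\<^sup>2 \<le> K"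
    using \<open>0 \<le> K\<close> by simp
  then show ?thesis unfolding K_def by (intro exI[of _ m]) argo
qed

lemma Cauchy_if_dist_sq_le:
  fixes xs :: "nat \<Rightarrow> 'a::metric_space"
  assumes dist_sq: "\<And>m n. (dist (xs m) (xs n))\<^sup>2 \<le> b m + b n" and b: "b \<longlonglongrightarrow> 0"
  shows "Cauchy xs"
proof (rule metric_CauchyI)
  fix e :: real assume "e > 0"
  then have "eventually (\<lambda>n. b n < e\<^sup>2 / 2) sequentially"
    using b by (intro order_tendstoD(2)) auto
  then obtain N where N: "\<And>n. N \<le> n \<Longrightarrow> b n < e\<^sup>2 / 2"
    unfolding eventually_sequentially by blast
  have "dist (xs m) (xs n) < e" if "N \<le> m" "N \<le> n" for m n
  proof -
    have "(dist (xs m) (xs n))\<^sup>2 < e\<^sup>2"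
      using dist_sq[of m n] N[OF that(1)] N[OF that(2)] by argo
    then show ?thesis
      using \<open>e > 0\<close> by (simp add: power_less_imp_less_base)
  qed
  then show "\<exists>M. \<forall>m\<ge>M. \<forall>n\<ge>M. dist (xs m) (xs n) < e"
    by blast
qed

lemma range_Inf_tendsto_seq:
  fixes f :: "'a \<Rightarrow> real"
  assumes "bdd_below (range f)"
  obtains xs where "(\<lambda>n. f (xs n)) \<longlonglongrightarrow> Inf (range f)"
proof -
  have "Inf (range f) \<in> closure (range f)"
    using assms by (intro closure_contains_Inf) auto
  then obtain v where v: "\<forall>n. v n \<in> range f" "v \<longlonglongrightarrow> Inf (range f)"
    unfolding closure_sequential by blast
  then have "\<forall>n. \<exists>x. v n = f x"
    by blast
  then obtain xs where "v = (\<lambda>n. f (xs n))"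
    by (metis ext)
  then show ?thesis
    using v(2) that by simp
qed

lemma CAT0_circumcenter_exists:
  fixes A :: "'a::complete_space set"
  assumes cat: "CAT0 (UNIV::'a set)" and A: "bounded A" "A \<noteq> {}"
  shows "\<exists>c. \<forall>z. circumradius A c \<le> circumradius A z"
proof -
  let ?r = "circumradius A"
  define \<rho> where "\<rho> = Inf (range (\<lambda>x. (?r x)\<^sup>2))"
  have bdd: "bdd_below (range (\<lambda>x. (?r x)\<^sup>2))"
    by (rule bdd_belowI[of _ 0]) auto
  then have \<rho>_le: "\<rho> \<le> (?r x)\<^sup>2" for x
    unfolding \<rho>_def by (rule cINF_lower) auto
  obtain xs where xs: "(\<lambda>n. (?r (xs n))\<^sup>2) \<longlonglongrightarrow> \<rho>"
    unfolding \<rho>_def using bdd by (rule range_Inf_tendsto_seq)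
  have "(dist (xs m) (xs n))\<^sup>2 \<le> 2 * ((?r (xs m))\<^sup>2 - \<rho>) + 2 * ((?r (xs n))\<^sup>2 - \<rho>)" for m n
  proof -
    obtain mid where "4 * (?r mid)\<^sup>2 \<le> 2 * (?r (xs m))\<^sup>2 + 2 * (?r (xs n))\<^sup>2 - (dist (xs m) (xs n))\<^sup>2"
      using CAT0_circumradius_midpoint[OF cat A] by blast
    then show ?thesis using \<rho>_le[of mid] by argo
  qed
  moreover have "(\<lambda>n. 2 * ((?r (xs n))\<^sup>2 - \<rho>)) \<longlonglongrightarrow> 0"
    using tendsto_mult_right_zero[OF LIM_zero[OF xs]] .
  ultimately have "Cauchy xs"
    by (rule Cauchy_if_dist_sq_le)
  then obtain c where c: "xs \<longlonglongrightarrow> c"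
    using Cauchy_convergent_iff convergent_def by blast
  have "continuous_on UNIV ?r"
    using circumradius_lipschitz[OF A] by (rule lipschitz_on_continuous_on)
  then have "(\<lambda>n. ?r (xs n)) \<longlonglongrightarrow> ?r c"
    by (rule continuous_on_tendsto_compose[OF _ c]) simp_all
  then have "(\<lambda>n. (?r (xs n))\<^sup>2) \<longlonglongrightarrow> (?r c)\<^sup>2"
    by (rule tendsto_power)
  then have c_sq: "(?r c)\<^sup>2 = \<rho>"
    using xs by (rule LIMSEQ_unique)
  have "?r c \<le> ?r z" for z
  proof (rule power2_le_imp_le)
    show "(?r c)\<^sup>2 \<le> (?r z)\<^sup>2" using c_sq \<rho>_le[of z] by simp
    show "0 \<le> ?r z" using circumradius_nonneg[OF A] .
  qed
  then show ?thesis by blast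
qed

lemma CAT0_circumcenter_unique:
  fixes A :: "'a::metric_space set"
  assumes cat: "CAT0 (UNIV::'a set)" and A: "bounded A" "A \<noteq> {}"
    and c: "\<forall>z. circumradius A c \<le> circumradius A z" and c': "\<forall>z. circumradius A c' \<le> circumradius A z"
  shows "c' = c"
proof -
  let ?r = "circumradius A"
  obtain m where m: "4 * (?r m)\<^sup>2 \<le> 2 * (?r c)\<^sup>2 + 2 * (?r c')\<^sup>2 - (dist c c')\<^sup>2"
    using CAT0_circumradius_midpoint[OF cat A] by blast
  have "?r c' = ?r c" using c c' by (meson order.antisym)
  then have "4 * (?r m)\<^sup>2 \<le> 4 * (?r c)\<^sup>2 - (dist c c')\<^sup>2"
    using m by simp
  moreover have "(?r c)\<^sup>2 \<le> (?r m)\<^sup>2"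
    using c circumradius_nonneg[OF A] by (simp add: power_mono)
  ultimately have "(dist c c')\<^sup>2 \<le> 0"
    by argo
  then show ?thesis by simp
qed

lemma isometry_dist: "isometry T \<Longrightarrow> dist (T x) (T y) = dist x y"
  by (simp add: isometry_def)

lemma isometry_inv_apply: "isometry T \<Longrightarrow> T (inv T x) = x"
  by (simp add: isometry_def surj_f_inv_f)

lemma isometry_dist_inv: "isometry T \<Longrightarrow> dist (inv T x) y = dist x (T y)"
  using isometry_dist[of T "inv T x" y] isometry_inv_apply[of T x] by simp

lemma isometry_funpow_dist: "isometry T \<Longrightarrow> dist ((T ^^ k) x) ((T ^^ k) y) = dist x y"
  by (induction k) (simp_all add: isometry_dist)

lemma isometry_continuous: "isometry T \<Longrightarrow> continuous_on UNIV T"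
  by (rule lipschitz_on_continuous_on[where L = 1]) (simp add: lipschitz_on_def isometry_dist)

lemma isom_action_horofun: "isometry T \<Longrightarrow> isom_action x0 T (horofun x0 y) = horofun x0 (T y)"
  unfolding isom_action_def horofun_def by (simp add: isometry_dist_inv)

lemma CAT0_isometry_bounded_orbit_fixed_point:
  fixes T :: "'a::complete_space \<Rightarrow> 'a"
  assumes cat: "CAT0 (UNIV::'a set)" and T: "isometry T"
    and bdd: "bounded (range (\<lambda>n. (T ^^ n) x0))"
  shows "\<exists>c. T c = c"
proof -
  let ?A = "range (\<lambda>n. (T ^^ n) x0)"
  have inv_T_radius: "circumradius ?A (inv T x) \<le> circumradius ?A x" for x
  proof (rule circumradius_le)
    fix a assume "a \<in> ?A"
    then obtain n where "a = (T ^^ n) x0" by blast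
    then have "dist (inv T x) a = dist x ((T ^^ Suc n) x0)"
      using isometry_dist_inv[OF T] by simp
    also have "\<dots> \<le> circumradius ?A x"
      by (rule dist_le_circumradius[OF bdd]) blast
    finally show "dist (inv T x) a \<le> circumradius ?A x" .
  qed blast
  obtain c where c: "\<forall>z. circumradius ?A c \<le> circumradius ?A z"
    using CAT0_circumcenter_exists[OF cat bdd] by blast
  moreover have "\<forall>z. circumradius ?A (inv T c) \<le> circumradius ?A z"
    using c inv_T_radius[of c] by (meson order.trans)
  ultimately have "inv T c = c"
    using CAT0_circumcenter_unique[OF cat bdd] by blast
  then have "T c = c"
    using isometry_inv_apply[OF T, of c] by simp
  then show ?thesis ..
qed

lemma isometry_unbounded_orbit:
  assumes T: "isometry T" and unbdd: "\<not> bounded (range (\<lambda>n. (T ^^ n) x0))"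
  obtains ys where "filterlim (\<lambda>n. dist x0 (ys n)) at_top sequentially"
    and "\<And>n. dist (ys n) (T (ys n)) = dist x0 (T x0)"
proof -
  have "\<forall>n. \<exists>k. real n < dist x0 ((T ^^ k) x0)"
    using unbdd unfolding bounded_any_center[of _ x0] by (auto simp: not_le)
  then obtain k where k: "\<And>n. real n < dist x0 ((T ^^ k n) x0)" by metis
  have "filterlim (\<lambda>n. dist x0 ((T ^^ k n) x0)) at_top sequentially"
    using filterlim_real_sequentially by (rule filterlim_at_top_mono) (simp add: k less_imp_le)
  moreover have "dist ((T ^^ m) x0) (T ((T ^^ m) x0)) = dist x0 (T x0)" for m
    using isometry_funpow_dist[OF T, of m x0 "T x0"] by (simp add: funpow_swap1)
  ultimately show ?thesis by (rule that[of "\<lambda>n. (T ^^ k n) x0"])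
qed

lemma product_sequence_cluster_point:
  fixes f :: "nat \<Rightarrow> 'i \<Rightarrow> 'b::topological_space"
  assumes K: "\<And>i. compact (K i)" and fK: "\<And>n i. f n i \<in> K i"
  shows "\<exists>g. \<forall>N. g \<in> closure (f ` {N..})"
proof -
  have "compactin (product_topology (\<lambda>i. euclidean) UNIV) (PiE UNIV K)"
    by (simp add: compactin_PiE K)
  then have "compact (PiE UNIV K)"
    by (simp add: euclidean_product_topology)
  then have "PiE UNIV K \<inter> (\<Inter>N. closure (f ` {N..})) \<noteq> {}"
  proof (rule compact_imp_fip_image)
    fix F :: "nat set" assume "finite F"
    then have "f (Max (insert 0 F)) \<in> closure (f ` {N..})" if "N \<in> F" for N
      using that by (intro closure_subset[THEN subsetD]) auto
    moreover have "f (Max (insert 0 F)) \<in> PiE UNIV K" using fK by auto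
    ultimately show "PiE UNIV K \<inter> (\<Inter>N\<in>F. closure (f ` {N..})) \<noteq> {}" by blast
  qed simp
  then show ?thesis by blast
qed

lemma cluster_point_in_closed:
  assumes "\<forall>N. g \<in> closure (f ` {N..})" and "closed S" and "eventually (\<lambda>n. f n \<in> S) sequentially"
  shows "g \<in> S"
proof -
  obtain N where "\<And>n. n \<ge> N \<Longrightarrow> f n \<in> S"
    using assms(3) unfolding eventually_sequentially by blast
  then have "closure (f ` {N..}) \<subseteq> S"
    using assms(2) by (intro closure_minimal) auto
  then show ?thesis using assms(1) by blast
qed

lemma cluster_point_tendsto:
  fixes \<Phi> :: "'b::topological_space \<Rightarrow> 'c::metric_space"
  assumes g: "\<forall>N. g \<in> closure (f ` {N..})" and \<Phi>: "continuous_on UNIV \<Phi>"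
    and lim: "(\<lambda>n. \<Phi> (f n)) \<longlonglongrightarrow> l"
  shows "\<Phi> g = l"
proof -
  have "dist (\<Phi> g) l \<le> e" if "e > 0" for e
  proof -
    have "g \<in> {h. dist (\<Phi> h) l \<le> e}"
    proof (rule cluster_point_in_closed[OF g])
      show "closed {h. dist (\<Phi> h) l \<le> e}"
        using \<Phi> by (intro closed_Collect_le continuous_on_dist continuous_on_const)
      have "eventually (\<lambda>n. dist (\<Phi> (f n)) l < e) sequentially"
        using lim \<open>e > 0\<close> by (rule tendstoD)
      then show "eventually (\<lambda>n. f n \<in> {h. dist (\<Phi> h) l \<le> e}) sequentially"
        by eventually_elim simp
    qed
    then show ?thesis by simp
  qed
  then have "dist (\<Phi> g) l \<le> 0"
    by (rule field_le_epsilon) simp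
  then show ?thesis by simp
qed

lemma CAT0_isometry_displacement_le:
  fixes T :: "'a::metric_space \<Rightarrow> 'a"
  assumes cat: "CAT0 (UNIV::'a set)" and T: "isometry T" and g: "geodesic_segment UNIV p q g"
    and p: "dist p (T p) \<le> C" and q: "dist q (T q) \<le> C" and t: "0 \<le> t" "t \<le> dist p q"
  shows "dist (T (g t)) (g t) \<le> C"
proof -
  have l: "0 \<le> t / dist p q" "t / dist p q \<le> 1"
    using t by (auto simp: divide_le_eq_1)
  have "dist (g t) ((T \<circ> g) t) \<le> (1 - t / dist p q) * dist p (T p) + (t / dist p q) * dist q (T q)"
    using CAT0_geodesic_dist_convex[OF cat g geodesic_segment_isometry[OF g T]] t
    by (simp add: isometry_dist[OF T])
  also have "\<dots> \<le> (1 - t / dist p q) * C + (t / dist p q) * C"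
    using l p q by (intro add_mono mult_left_mono) auto
  also have "\<dots> = C"
    by (simp add: algebra_simps)
  finally show ?thesis
    by (simp add: dist_commute)
qed

lemma proper_geodesic_segments_limit_ray:
  fixes x0 :: "'a::metric_space" and F :: "'a \<Rightarrow> 'a"
  assumes proper: "proper_space (UNIV::'a set)"
    and gs: "\<And>n. geodesic_segment UNIV x0 (ys n) (gs n)"
    and far: "filterlim (\<lambda>n. dist x0 (ys n)) at_top sequentially"
    and F: "continuous_on UNIV F"
    and bound: "\<And>n t. 0 \<le> t \<Longrightarrow> t \<le> dist x0 (ys n) \<Longrightarrow> dist (F (gs n t)) (gs n t) \<le> C"
  shows "\<exists>\<gamma>. geodesic_ray \<gamma> \<and> (\<forall>t\<ge>0. dist (F (\<gamma> t)) (\<gamma> t) \<le> C)"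
proof -
  define f where "f n t = gs n (max 0 (min t (dist x0 (ys n))))" for n t
  have f_gs: "f n t = gs n t" if "0 \<le> t" "t \<le> dist x0 (ys n)" for n t
    using that by (simp add: f_def)
  have "f n t \<in> cball x0 \<bar>t\<bar>" for n t
  proof -
    have "dist x0 (f n t) = max 0 (min t (dist x0 (ys n)))"
      unfolding f_def by (rule geodesic_segment_dist_start[OF gs]) auto
    then show ?thesis by auto
  qed
  moreover have "compact (cball x0 \<bar>t\<bar>)" for t
    using proper unfolding proper_space_def by auto
  ultimately obtain \<gamma> where \<gamma>: "\<forall>N. \<gamma> \<in> closure (f ` {N..})"
    using product_sequence_cluster_point[of "\<lambda>t. cball x0 \<bar>t\<bar>" f] by blast
  have far_ev: "eventually (\<lambda>n. t \<le> dist x0 (ys n)) sequentially" for t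
    using far unfolding filterlim_at_top by blast
  have "dist (\<gamma> s) (\<gamma> t) = \<bar>s - t\<bar>" if "0 \<le> s" "0 \<le> t" for s t
  proof (rule cluster_point_tendsto[OF \<gamma>, of "\<lambda>h. dist (h s) (h t)"])
    show "continuous_on UNIV (\<lambda>h :: real \<Rightarrow> 'a. dist (h s) (h t))"
      by (intro continuous_intros continuous_on_product_coordinates)
    have "eventually (\<lambda>n. dist (f n s) (f n t) = \<bar>s - t\<bar>) sequentially"
      using far_ev[of s] far_ev[of t]
      by eventually_elim (simp add: that f_gs geodesic_segment_dist[OF gs])
    then show "(\<lambda>n. dist (f n s) (f n t)) \<longlonglongrightarrow> \<bar>s - t\<bar>"
      by (rule tendsto_eventually)
  qed
  moreover have "dist (F (\<gamma> t)) (\<gamma> t) \<le> C" if "0 \<le> t" for t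
  proof -
    have "continuous_on UNIV (\<lambda>h :: real \<Rightarrow> 'a. F (h t))"
      using continuous_on_compose2[OF F continuous_on_product_coordinates] by simp
    then have "closed {h :: real \<Rightarrow> 'a. dist (F (h t)) (h t) \<le> C}"
      by (intro closed_Collect_le continuous_intros continuous_on_product_coordinates)
    moreover have "eventually (\<lambda>n. f n \<in> {h. dist (F (h t)) (h t) \<le> C}) sequentially"
      using far_ev[of t] by eventually_elim (simp add: that f_gs bound)
    ultimately show ?thesis
      using cluster_point_in_closed[OF \<gamma>] by blast
  qed
  ultimately show ?thesis
    unfolding geodesic_ray_def by blast
qed

lemma CAT0_isometry_fixes_metric_functional:
  fixes T :: "'a::complete_space \<Rightarrow> 'a" and x0 :: 'a
  assumes cat: "CAT0 (UNIV::'a set)" and T: "isometry T"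
  shows "\<exists>h\<in>metric_compactification x0. isom_action x0 T h = h"
proof (cases "bounded (range (\<lambda>n. (T ^^ n) x0))")
  case True
  then obtain c where "T c = c"
    using CAT0_isometry_bounded_orbit_fixed_point[OF cat T] by blast
  moreover have "horofun x0 c \<in> metric_compactification x0"
    unfolding metric_compactification_def by (intro closure_subset[THEN subsetD]) auto
  ultimately show ?thesis
    using isom_action_horofun[OF T, of x0 c] by metis
next
  case False
  obtain ys where far: "filterlim (\<lambda>n. dist x0 (ys n)) at_top sequentially"
    and displacement: "\<And>n. dist (ys n) (T (ys n)) = dist x0 (T x0)"
    using isometry_unbounded_orbit[OF T False] by blast
  define f where "f n = horofun x0 (ys n)" for n
  have "f n x \<in> {- dist x x0 .. dist x x0}" for n x
    unfolding f_def horofun_def using dist_triangle[of x "ys n" x0] dist_triangle[of x0 "ys n" x]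
    by (auto simp: dist_commute)
  then obtain g where g: "\<forall>N. g \<in> closure (f ` {N..})"
    using product_sequence_cluster_point[of "\<lambda>x. {- dist x x0 .. dist x x0}" f] by auto
  have "closure (f ` {0..}) \<subseteq> metric_compactification x0"
    unfolding metric_compactification_def f_def by (intro closure_mono) auto
  then have "g \<in> metric_compactification x0"
    using g by blast
  moreover have "isom_action x0 T g x - g x = 0" for x
  proof (rule cluster_point_tendsto[OF g])
    show "continuous_on UNIV (\<lambda>h. isom_action x0 T h x - h x)"
      unfolding isom_action_def by (intro continuous_intros continuous_on_product_coordinates)
    show "(\<lambda>n. isom_action x0 T (f n) x - f n x) \<longlonglongrightarrow> 0"
      using CAT0_horofun_shift_tendsto[OF cat far, where zs = "\<lambda>n. T (ys n)" and c = "dist x0 (T x0)"]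
        displacement
      by (simp add: f_def isom_action_horofun[OF T])
  qed
  then have "isom_action x0 T g = g"
    by auto
  ultimately show ?thesis by blast
qed

lemma CAT0_isometry_fixes_visual_point:
  fixes T :: "'a::complete_space \<Rightarrow> 'a"
  assumes cat: "CAT0 (UNIV::'a set)" and T: "isometry T" and proper: "proper_space (UNIV::'a set)"
  shows "fixes_visual_point T"
proof -
  fix x0 :: 'a
  show ?thesis
  proof (cases "bounded (range (\<lambda>n. (T ^^ n) x0))")
    case True
    then show ?thesis
      using CAT0_isometry_bounded_orbit_fixed_point[OF cat T] unfolding fixes_visual_point_def by blast
  next
    case False
    obtain ys where far: "filterlim (\<lambda>n. dist x0 (ys n)) at_top sequentially"
      and displacement: "\<And>n. dist (ys n) (T (ys n)) = dist x0 (T x0)"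
      using isometry_unbounded_orbit[OF T False] by blast
    have "\<forall>n. \<exists>\<gamma>. geodesic_segment UNIV x0 (ys n) \<gamma>"
      using CAT0_geodesic_segment_exists[OF cat] by blast
    then obtain gs where gs: "\<And>n. geodesic_segment UNIV x0 (ys n) (gs n)"
      by metis
    have "dist (T (gs n t)) (gs n t) \<le> dist x0 (T x0)" if "0 \<le> t" "t \<le> dist x0 (ys n)" for n t
      using that displacement by (intro CAT0_isometry_displacement_le[OF cat T gs]) auto
    then obtain \<gamma> where "geodesic_ray \<gamma>" "\<forall>t\<ge>0. dist (T (\<gamma> t)) (\<gamma> t) \<le> dist x0 (T x0)"
      using proper_geodesic_segments_limit_ray[OF proper gs far isometry_continuous[OF T]] by blast
    then show ?thesis
      unfolding fixes_visual_point_def asymptotic_def by auto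
  qed
qed

theorem corollary5:
  fixes T :: "'a::complete_space \<Rightarrow> 'a" and x0 :: 'a
  assumes "CAT0 (UNIV :: 'a set)" and "isometry T"
  shows "(\<exists>h\<in>metric_compactification x0. isom_action x0 T h = h)
         \<and> (proper_space (UNIV :: 'a set) \<longrightarrow> fixes_visual_point T)"
  using CAT0_isometry_fixes_metric_functional[OF assms] CAT0_isometry_fixes_visual_point[OF assms]
  by blast

end
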